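(* Consider the interacting innovation model described in the context, suppose $\Gamma$ is irreducible with Perron–Frobenius eigenvalue $\gamma^*\in(0,1)$. Define $\zeta_0=1$ and $\zeta_t=\prod_{k=1}^t\bigl[1-\frac{1-\gamma^*}{k}\bigr]^{-1}$ for $t\ge1$, and $V^*_t=\sum_{j=1}^N Z^*_{t,j}(1-Z^*_{t,j})$ (which equals $\sum_j E[(X^*_{t+1,j}-Z^*_{t,j})^2\mid\mathcal F_t]$, where $X^*_{t+1,j}$ is the indicator that the color drawn from urn $j$ at time $t+1$ is new). Then $$\sum_{t}\frac{\zeta_{t+1}^2}{(t+1)^2}E[V^*_t]<+\infty\qquad\text{and hence}\qquad\sum_t\frac{\zeta_{t+1}^2}{(t+1)^2}V^*_t<+\infty\ \text{almost surely}.$$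
   Context: Fix an integer $N\ge1$, parameters $\theta_1,\dots,\theta_N>0$ and non-negative $N\times N$ matrices $\Gamma=(\gamma_{j,h})$, $\Lambda=(\lambda_{j,h})$ and $W=(w_{j,h})=\Gamma+\Lambda$ such that $\mathbf 1^\top W=\mathbf 1^\top$ (i.e. $\sum_j w_{j,h}=1$ for every $h$), $\sum_j\gamma_{j,h}<1$ for every $h$, and $\lambda_{h,h}>0$ for every $h$; here $\mathbf 1$ denotes the all-ones vector. The model is a system of $N$ interacting urns (agents) with infinitely many possible colors (items). At each time-step $t\ge1$ exactly one color $C_{t,h}$ is drawn from each urn $h=1,\dots,N$. A color drawn at time $t$ is called "new" if it was never drawn from any urn of the system at a time $<t$, and "old" otherwise; by construction the same new color is never drawn simultaneously from two different urns, so every color $c$ that is ever drawn has a unique urn $j^*(c)$ from which it was drawn for the first time. Let $\mathcal F_t$ be the $\sigma$-field generated by all draws up to time $t$. Let $K_t(j,c)$ be the number of $n\le t$ with $C_{n,j}=c$; let $D^*_{t,j}$ be the number of distinct colors whose first drawing in the whole system occurred from urn $j$ at a time $\le t$ (so $D^*_{0,j}=0$); let $D^*_t=\sum_{j}D^*_{t,j}$ (the number of distinct colors drawn in the system up to time $t$); and let $D_{t,h}$ be the number of distinct colors drawn from urn $h$ up to time $t$. Dynamics: conditionally on $\mathcal F_t$, the draws $C_{t+1,1},\dots,C_{t+1,N}$ are independent and, for each $h$, $$P(C_{t+1,h}\text{ is new}\mid\mathcal F_t)=Z^*_{t,h}:=\frac{\theta_h+\sum_{j=1}^N\gamma_{j,h}D^*_{t,j}}{\theta_h+t},$$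 while for each old color $c$ (drawn at some time $\le t$), $$P(C_{t+1,h}=c\mid\mathcal F_t)=P_t(h,c):=\frac{\sum_{j=1}^N w_{j,h}K_t(j,c)-\gamma_{j^*(c),h}}{\theta_h+t}.$$ A non-negative square matrix is irreducible if the directed graph having it as adjacency matrix is strongly connected. *)

theory Defs
  imports "HOL-Probability.Probability" "Jordan_Normal_Form.Spectral_Radius"
begin

(* Urns are indexed by 0..N-1, colours are natural numbers, draws happen at times t >= 1.
   A history is eta :: nat => nat => nat, where eta n h is the colour drawn from urn h at time n;
   only the window 1 <= n <= t, h < N is ever inspected. *)

definition drawn :: "nat \<Rightarrow> (nat \<Rightarrow> nat \<Rightarrow> nat) \<Rightarrow> nat \<Rightarrow> nat set" where
  "drawn N \<eta> t = {\<eta> n h | n h. 1 \<le> n \<and> n \<le> t \<and> h < N}"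

definition Kcnt :: "(nat \<Rightarrow> nat \<Rightarrow> nat) \<Rightarrow> nat \<Rightarrow> nat \<Rightarrow> nat \<Rightarrow> nat" where
  "Kcnt \<eta> t j c = card {n. 1 \<le> n \<and> n \<le> t \<and> \<eta> n j = c}"

definition firsttime :: "nat \<Rightarrow> (nat \<Rightarrow> nat \<Rightarrow> nat) \<Rightarrow> nat \<Rightarrow> nat" where
  "firsttime N \<eta> c = (LEAST n. 1 \<le> n \<and> (\<exists>h<N. \<eta> n h = c))"

definition jstar :: "nat \<Rightarrow> (nat \<Rightarrow> nat \<Rightarrow> nat) \<Rightarrow> nat \<Rightarrow> nat" where
  "jstar N \<eta> c = (LEAST j. j < N \<and> \<eta> (firsttime N \<eta> c) j = c)"

definition Dstar :: "nat \<Rightarrow> (nat \<Rightarrow> nat \<Rightarrow> nat) \<Rightarrow> nat \<Rightarrow> nat \<Rightarrow> nat" where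
  "Dstar N \<eta> t j = card {c \<in> drawn N \<eta> t. jstar N \<eta> c = j}"

definition Zstar :: "nat \<Rightarrow> (nat \<Rightarrow> real) \<Rightarrow> (nat \<Rightarrow> nat \<Rightarrow> real) \<Rightarrow> (nat \<Rightarrow> nat \<Rightarrow> nat) \<Rightarrow> nat \<Rightarrow> nat \<Rightarrow> real" where
  "Zstar N \<theta> \<Gamma> \<eta> t h = (\<theta> h + (\<Sum>j<N. \<Gamma> j h * real (Dstar N \<eta> t j))) / (\<theta> h + real t)"

definition Pold :: "nat \<Rightarrow> (nat \<Rightarrow> real) \<Rightarrow> (nat \<Rightarrow> nat \<Rightarrow> real) \<Rightarrow> (nat \<Rightarrow> nat \<Rightarrow> real)
    \<Rightarrow> (nat \<Rightarrow> nat \<Rightarrow> nat) \<Rightarrow> nat \<Rightarrow> nat \<Rightarrow> nat \<Rightarrow> real" where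
  "Pold N \<theta> \<Gamma> W \<eta> t h c =
     ((\<Sum>j<N. W j h * real (Kcnt \<eta> t j c)) - \<Gamma> (jstar N \<eta> c) h) / (\<theta> h + real t)"

(* conditional probability, given history eta up to time t, that urn h produces outcome y at time t+1:
   None = a new colour, Some c = the old colour c *)
definition stepprob :: "nat \<Rightarrow> (nat \<Rightarrow> real) \<Rightarrow> (nat \<Rightarrow> nat \<Rightarrow> real) \<Rightarrow> (nat \<Rightarrow> nat \<Rightarrow> real)
    \<Rightarrow> (nat \<Rightarrow> nat \<Rightarrow> nat) \<Rightarrow> nat \<Rightarrow> nat \<Rightarrow> nat option \<Rightarrow> real" where
  "stepprob N \<theta> \<Gamma> W \<eta> t h y = (case y of
       None \<Rightarrow> Zstar N \<theta> \<Gamma> \<eta> t h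
     | Some c \<Rightarrow> (if c \<in> drawn N \<eta> t then Pold N \<theta> \<Gamma> W \<eta> t h c else 0))"

definition outcome :: "nat \<Rightarrow> (nat \<Rightarrow> nat \<Rightarrow> nat) \<Rightarrow> nat \<Rightarrow> nat \<Rightarrow> nat option" where
  "outcome N \<eta> t h = (if \<eta> (Suc t) h \<in> drawn N \<eta> t then Some (\<eta> (Suc t) h) else None)"

definition histev :: "'w measure \<Rightarrow> nat \<Rightarrow> (nat \<Rightarrow> nat \<Rightarrow> 'w \<Rightarrow> nat) \<Rightarrow> nat \<Rightarrow> (nat \<Rightarrow> nat \<Rightarrow> nat) \<Rightarrow> 'w set" where
  "histev M N C t \<eta> = {\<omega> \<in> space M. \<forall>n h. 1 \<le> n \<and> n \<le> t \<and> h < N \<longrightarrow> C n h \<omega> = \<eta> n h}"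

(* The interacting innovation model: C n h \<omega> is the colour drawn from urn h at time n. *)
definition innovation_model :: "'w measure \<Rightarrow> nat \<Rightarrow> (nat \<Rightarrow> real) \<Rightarrow> (nat \<Rightarrow> nat \<Rightarrow> real)
    \<Rightarrow> (nat \<Rightarrow> nat \<Rightarrow> real) \<Rightarrow> (nat \<Rightarrow> nat \<Rightarrow> 'w \<Rightarrow> nat) \<Rightarrow> bool" where
  "innovation_model M N \<theta> \<Gamma> W C \<longleftrightarrow>
     prob_space M \<and>
     (\<forall>n h. C n h \<in> measurable M (count_space UNIV)) \<and>
     \<comment> \<open>the same new colour is never drawn simultaneously from two different urns\<close>
     (AE \<omega> in M. \<forall>t h h'. h < N \<and> h' < N \<and> h \<noteq> h' \<and>
        outcome N (\<lambda>n k. C n k \<omega>) t h = None \<longrightarrow> C (Suc t) h \<omega> \<noteq> C (Suc t) h' \<omega>) \<and>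
     \<comment> \<open>conditionally on F_t the N draws at time t+1 are independent with the prescribed laws\<close>
     (\<forall>t \<eta> (y :: nat \<Rightarrow> nat option).
        measure M {\<omega> \<in> histev M N C t \<eta>. \<forall>h<N. outcome N (\<lambda>n k. C n k \<omega>) t h = y h}
        = measure M (histev M N C t \<eta>) * (\<Prod>h<N. stepprob N \<theta> \<Gamma> W \<eta> t h (y h)))"

definition irreducible_mat :: "nat \<Rightarrow> (nat \<Rightarrow> nat \<Rightarrow> real) \<Rightarrow> bool" where
  "irreducible_mat N A \<longleftrightarrow>
     (\<forall>i<N. \<forall>j<N. (i, j) \<in> {(a, b). a < N \<and> b < N \<and> A a b > 0}\<^sup>*)"

(* Perron-Frobenius eigenvalue of a non-negative matrix = its spectral radius *)
definition pf_eigenvalue :: "nat \<Rightarrow> (nat \<Rightarrow> nat \<Rightarrow> real) \<Rightarrow> real" where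
  "pf_eigenvalue N A = spectral_radius (mat N N (\<lambda>(i, j). complex_of_real (A i j)))"

definition zeta :: "real \<Rightarrow> nat \<Rightarrow> real" where
  "zeta g t = (\<Prod>k\<in>{1..t}. inverse (1 - (1 - g) / real k))"

definition Vstar :: "nat \<Rightarrow> (nat \<Rightarrow> real) \<Rightarrow> (nat \<Rightarrow> nat \<Rightarrow> real) \<Rightarrow> (nat \<Rightarrow> nat \<Rightarrow> 'w \<Rightarrow> nat) \<Rightarrow> nat \<Rightarrow> 'w \<Rightarrow> real" where
  "Vstar N \<theta> \<Gamma> C t \<omega> = (\<Sum>j<N. Zstar N \<theta> \<Gamma> (\<lambda>n k. C n k \<omega>) t j * (1 - Zstar N \<theta> \<Gamma> (\<lambda>n k. C n k \<omega>) t j))"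

end

theory Submission
  imports Defs
begin

text \<open>Since \<open>V\<^sup>*\<^sub>t \<le> \<Sum>\<^sub>j Z\<^sup>*\<^sub>t\<^sub>,\<^sub>j\<close> and \<open>Z\<^sup>*\<^sub>t\<^sub>,\<^sub>j\<close> is affine in the counts \<open>D\<^sup>*\<^sub>t\<^sub>,\<^sub>i\<close>, everything reduces
  to the growth of \<open>E D\<^sup>*\<^sub>t\<close>. A colour is new at urn \<open>j\<close> with conditional probability
  \<open>Z\<^sup>*\<^sub>t\<^sub>,\<^sub>j\<close>, so \<open>E D\<^sup>*\<^sub>t\<^sub>+\<^sub>1 \<le> E D\<^sup>*\<^sub>t + E Z\<^sup>*\<^sub>t\<close>. Fix \<open>\<gamma>\<close> with \<open>\<gamma>\<^sup>* < \<gamma> < 2\<gamma>\<^sup>*\<close>. As \<open>\<gamma>\<close> exceeds the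
  spectral radius of \<open>\<Gamma>\<close>, a truncated Neumann series gives \<open>u \<ge> 1\<close> with \<open>\<Gamma> u \<le> \<gamma> u\<close>, and a
  discrete Gronwall inequality for the \<open>u\<close>-weighted mean of \<open>E D\<^sup>*\<^sub>t\<close> yields \<open>E D\<^sup>*\<^sub>t = O(t\<^sup>\<gamma>)\<close>,
  hence \<open>E V\<^sup>*\<^sub>t = O(t\<^sup>\<gamma>\<^sup>-\<^sup>1)\<close>. The same inequality gives \<open>\<zeta>\<^sub>t = O(t\<^sup>1\<^sup>-\<^sup>\<gamma>\<^sup>*)\<close>, so the \<open>t\<close>-th
  term of the series is \<open>O(t\<^sup>\<gamma>\<^sup>-\<^sup>1\<^sup>-\<^sup>2\<^sup>\<gamma>\<^sup>*)\<close> and the series converges; the almost sure statement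
  follows by monotone convergence.\<close>

section \<open>Histories and colour counts\<close>

text \<open>Truncating a history to the window of times \<open>1..t\<close> and urns \<open>< N\<close> makes the histories
  up to time \<open>t\<close> a countable set.\<close>
definition hist_window :: "nat \<Rightarrow> nat \<Rightarrow> (nat \<Rightarrow> nat \<Rightarrow> nat) \<Rightarrow> (nat \<Rightarrow> nat \<Rightarrow> nat)" where
  "hist_window N t \<eta> = (\<lambda>n h. if 1 \<le> n \<and> n \<le> t \<and> h < N then \<eta> n h else 0)"

lemma hist_window_hist_window: "t \<le> T \<Longrightarrow> hist_window N t (hist_window N T \<eta>) = hist_window N t \<eta>"
  by (auto simp: hist_window_def fun_eq_iff)

lemma hist_window_range: "\<eta> \<in> range (hist_window N t) \<Longrightarrow> hist_window N t \<eta> = \<eta>"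
  using hist_window_hist_window[of t t N] by auto

lemma countable_range_hist_window: "countable (range (hist_window N t))"
proof -
  define extend where "extend f = (\<lambda>n h. if 1 \<le> n \<and> n \<le> t \<and> h < N then f (n, h) else 0::nat)"
    for f :: "nat \<times> nat \<Rightarrow> nat"
  have "hist_window N t \<eta> = extend (restrict (\<lambda>(n, h). \<eta> n h) ({1..t} \<times> {..<N}))" for \<eta>
    unfolding extend_def hist_window_def by (auto simp: fun_eq_iff)
  then have "range (hist_window N t) \<subseteq> extend ` (PiE ({1..t} \<times> {..<N}) (\<lambda>_. UNIV))"
    by auto
  moreover have "countable (PiE ({1..t} \<times> {..<N}) (\<lambda>_. UNIV :: nat set))"
    by (rule countable_PiE) auto
  ultimately show ?thesis by (meson countable_image countable_subset)
qed

lemma drawn_hist_window: "drawn N (hist_window N t \<eta>) t = drawn N \<eta> t"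
  unfolding drawn_def hist_window_def by force

lemma drawn_eq_image: "drawn N \<eta> t = (\<lambda>(n, h). \<eta> n h) ` ({1..t} \<times> {..<N})"
  unfolding drawn_def by (auto simp: image_def) blast

lemma drawnI: "1 \<le> n \<Longrightarrow> n \<le> t \<Longrightarrow> h < N \<Longrightarrow> \<eta> n h \<in> drawn N \<eta> t"
  unfolding drawn_def by blast

lemma finite_drawn: "finite (drawn N \<eta> t)"
  unfolding drawn_eq_image by auto

lemma firsttime_drawn:
  assumes "c \<in> drawn N \<eta> t"
  shows "1 \<le> firsttime N \<eta> c" "firsttime N \<eta> c \<le> t" "\<exists>h<N. \<eta> (firsttime N \<eta> c) h = c"
proof -
  from assms obtain n h where nh: "1 \<le> n" "n \<le> t" "h < N" "\<eta> n h = c"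
    unfolding drawn_def by auto
  then have P: "1 \<le> n \<and> (\<exists>h<N. \<eta> n h = c)" by auto
  show "1 \<le> firsttime N \<eta> c" "\<exists>h<N. \<eta> (firsttime N \<eta> c) h = c"
    using LeastI[of "\<lambda>n. 1 \<le> n \<and> (\<exists>h<N. \<eta> n h = c)", OF P] unfolding firsttime_def by auto
  have "firsttime N \<eta> c \<le> n"
    unfolding firsttime_def by (rule Least_le) (use P in auto)
  with nh show "firsttime N \<eta> c \<le> t" by auto
qed

lemma jstar_drawn:
  assumes "c \<in> drawn N \<eta> t"
  shows "jstar N \<eta> c < N" "\<eta> (firsttime N \<eta> c) (jstar N \<eta> c) = c"
proof -
  obtain h where "h < N" "\<eta> (firsttime N \<eta> c) h = c"
    using firsttime_drawn(3)[OF assms] by auto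
  then show "jstar N \<eta> c < N" "\<eta> (firsttime N \<eta> c) (jstar N \<eta> c) = c"
    using LeastI[of "\<lambda>j. j < N \<and> \<eta> (firsttime N \<eta> c) j = c", of h] unfolding jstar_def by auto
qed

lemma firsttime_hist_window:
  assumes c: "c \<in> drawn N \<eta> t"
  shows "firsttime N (hist_window N t \<eta>) c = firsttime N \<eta> c"
  unfolding firsttime_def[of N "hist_window N t \<eta>"]
proof (rule Least_equality)
  note ft = firsttime_drawn[OF c]
  show "1 \<le> firsttime N \<eta> c \<and> (\<exists>h<N. hist_window N t \<eta> (firsttime N \<eta> c) h = c)"
    using ft by (auto simp: hist_window_def)
  fix n assume n: "1 \<le> n \<and> (\<exists>h<N. hist_window N t \<eta> n h = c)"
  show "firsttime N \<eta> c \<le> n"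
  proof (cases "n \<le> t")
    case True
    with n have "1 \<le> n \<and> (\<exists>h<N. \<eta> n h = c)" by (auto simp: hist_window_def)
    then show ?thesis unfolding firsttime_def by (rule Least_le)
  qed (use ft in auto)
qed

lemma jstar_hist_window:
  assumes c: "c \<in> drawn N \<eta> t"
  shows "jstar N (hist_window N t \<eta>) c = jstar N \<eta> c"
proof -
  have "\<And>j. j < N \<Longrightarrow> hist_window N t \<eta> (firsttime N \<eta> c) j = \<eta> (firsttime N \<eta> c) j"
    using firsttime_drawn[OF c] by (auto simp: hist_window_def)
  then have "(\<lambda>j. j < N \<and> hist_window N t \<eta> (firsttime N \<eta> c) j = c)
           = (\<lambda>j. j < N \<and> \<eta> (firsttime N \<eta> c) j = c)"
    by auto
  then show ?thesis unfolding jstar_def firsttime_hist_window[OF c] by simp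
qed

lemma Dstar_hist_window: "Dstar N (hist_window N t \<eta>) t j = Dstar N \<eta> t j"
proof -
  have "{c \<in> drawn N (hist_window N t \<eta>) t. jstar N (hist_window N t \<eta>) c = j}
      = {c \<in> drawn N \<eta> t. jstar N \<eta> c = j}"
    using jstar_hist_window drawn_hist_window by auto
  then show ?thesis unfolding Dstar_def by simp
qed

lemma Zstar_hist_window: "Zstar N \<theta> \<Gamma> (hist_window N t \<eta>) t h = Zstar N \<theta> \<Gamma> \<eta> t h"
  unfolding Zstar_def Dstar_hist_window ..

lemma outcome_hist_window:
  "h < N \<Longrightarrow> outcome N (hist_window N (Suc t) \<eta>) t h = outcome N \<eta> t h"
  using drawn_hist_window[of N t "hist_window N (Suc t) \<eta>"]
  by (simp add: outcome_def hist_window_hist_window drawn_hist_window) (simp add: hist_window_def)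

lemma firsttime_new:
  assumes "c \<in> drawn N \<eta> (Suc t)" "c \<notin> drawn N \<eta> t"
  shows "firsttime N \<eta> c = Suc t"
proof -
  note ft = firsttime_drawn[OF assms(1)]
  then obtain h where h: "h < N" "\<eta> (firsttime N \<eta> c) h = c" by auto
  have "\<not> firsttime N \<eta> c \<le> t"
    using drawnI[of "firsttime N \<eta> c" t h N \<eta>] ft(1) h assms(2) by auto
  with ft(2) show ?thesis by simp
qed

lemma Dstar_le: "Dstar N \<eta> t j \<le> t"
proof -
  let ?S = "{c \<in> drawn N \<eta> t. jstar N \<eta> c = j}"
  have "inj_on (firsttime N \<eta>) ?S"
    by (rule inj_onI) (metis (mono_tags, lifting) jstar_drawn(2) mem_Collect_eq)
  moreover have "firsttime N \<eta> ` ?S \<subseteq> {1..t}"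
    using firsttime_drawn by fastforce
  ultimately have "card ?S \<le> card {1..t}"
    by (meson card_inj_on_le finite_atLeastAtMost)
  then show ?thesis unfolding Dstar_def by simp
qed

text \<open>A colour counted in \<open>D\<^sup>*\<^sub>t\<^sub>+\<^sub>1,\<^sub>j\<close> but not in \<open>D\<^sup>*\<^sub>t\<^sub>,\<^sub>j\<close> is first drawn at time \<open>t+1\<close> from urn \<open>j\<close>,
  so it is the new colour \<open>\<eta> (t+1) j\<close>.\<close>
lemma Dstar_Suc_le:
  "Dstar N \<eta> (Suc t) j \<le> Dstar N \<eta> t j + (if outcome N \<eta> t j = None then 1 else 0)"
proof -
  let ?S = "\<lambda>t. {c \<in> drawn N \<eta> t. jstar N \<eta> c = j}"
  let ?E = "if outcome N \<eta> t j = None then {\<eta> (Suc t) j} else {}"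
  have "?S (Suc t) \<subseteq> ?S t \<union> ?E"
  proof
    fix c assume c: "c \<in> ?S (Suc t)"
    show "c \<in> ?S t \<union> ?E"
    proof (cases "c \<in> drawn N \<eta> t")
      case False
      with c firsttime_new[of c N \<eta> t] jstar_drawn(2)[of c N \<eta> "Suc t"]
      have "\<eta> (Suc t) j = c" by auto
      with False show ?thesis by (auto simp: outcome_def)
    qed (use c in auto)
  qed
  then have "card (?S (Suc t)) \<le> card (?S t \<union> ?E)"
    by (intro card_mono) (auto simp: finite_drawn)
  also have "\<dots> \<le> card (?S t) + card ?E"
    by (rule card_Un_le)
  finally show ?thesis unfolding Dstar_def by (auto split: if_splits)
qed

lemma sum_Kcnt:
  assumes "i < N"
  shows "(\<Sum>c\<in>drawn N \<eta> t. real (Kcnt \<eta> t i c)) = real t"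
proof -
  have sub: "(\<lambda>n. \<eta> n i) ` {1..t} \<subseteq> drawn N \<eta> t"
    using assms by (auto intro: drawnI)
  have "(\<Sum>c\<in>drawn N \<eta> t. card {n \<in> {1..t}. \<eta> n i = c}) = card {1..t}"
    using sum.group[OF finite_atLeastAtMost finite_drawn sub, of "\<lambda>_. 1::nat"] by simp
  moreover have "\<And>c. {n \<in> {1..t}. \<eta> n i = c} = {n. 1 \<le> n \<and> n \<le> t \<and> \<eta> n i = c}"
    by auto
  ultimately have "(\<Sum>c\<in>drawn N \<eta> t. Kcnt \<eta> t i c) = t"
    unfolding Kcnt_def by simp
  then show ?thesis by (metis of_nat_sum)
qed

lemma sum_drawn_jstar:
  "(\<Sum>c\<in>drawn N \<eta> t. G (jstar N \<eta> c)) = (\<Sum>i<N. G i * real (Dstar N \<eta> t i))"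
proof -
  have "(\<Sum>c\<in>drawn N \<eta> t. G (jstar N \<eta> c))
      = (\<Sum>i<N. \<Sum>c\<in>{c \<in> drawn N \<eta> t. jstar N \<eta> c = i}. G (jstar N \<eta> c))"
    using sum.group[of "drawn N \<eta> t" "{..<N}" "jstar N \<eta>" "\<lambda>c. G (jstar N \<eta> c)"]
      finite_drawn jstar_drawn(1) by fastforce
  also have "\<dots> = (\<Sum>i<N. \<Sum>c\<in>{c \<in> drawn N \<eta> t. jstar N \<eta> c = i}. G i)"
    by (intro sum.cong) auto
  finally show ?thesis unfolding Dstar_def by (simp add: mult.commute)
qed

lemma Zstar_add_sum_Pold:
  assumes "\<theta> h > 0" and "(\<Sum>j<N. W j h) = 1"
  shows "Zstar N \<theta> \<Gamma> \<eta> t h + (\<Sum>c\<in>drawn N \<eta> t. Pold N \<theta> \<Gamma> W \<eta> t h c) = 1"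
proof -
  let ?D = "drawn N \<eta> t"
  have "(\<Sum>c\<in>?D. \<Sum>j<N. W j h * real (Kcnt \<eta> t j c)) = (\<Sum>j<N. W j h * (\<Sum>c\<in>?D. real (Kcnt \<eta> t j c)))"
    by (subst sum.swap) (simp add: sum_distrib_left)
  also have "\<dots> = (\<Sum>j<N. W j h) * real t"
    by (simp add: sum_Kcnt sum_distrib_right)
  finally have K: "(\<Sum>c\<in>?D. \<Sum>j<N. W j h * real (Kcnt \<eta> t j c)) = real t"
    using assms(2) by simp
  have "(\<Sum>c\<in>?D. Pold N \<theta> \<Gamma> W \<eta> t h c)
      = ((\<Sum>c\<in>?D. \<Sum>j<N. W j h * real (Kcnt \<eta> t j c)) - (\<Sum>c\<in>?D. \<Gamma> (jstar N \<eta> c) h)) / (\<theta> h + real t)"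
    unfolding Pold_def by (simp add: sum_divide_distrib[symmetric] sum_subtractf)
  also have "\<dots> = (real t - (\<Sum>i<N. \<Gamma> i h * real (Dstar N \<eta> t i))) / (\<theta> h + real t)"
    unfolding K sum_drawn_jstar[of "\<lambda>i. \<Gamma> i h"] ..
  finally show ?thesis
    unfolding Zstar_def using assms(1) by (simp add: field_simps)
qed

lemma Zstar_nonneg_le_1:
  assumes "\<theta> h > 0" and "\<forall>j<N. \<Gamma> j h \<ge> 0" and "(\<Sum>j<N. \<Gamma> j h) \<le> 1"
  shows "0 \<le> Zstar N \<theta> \<Gamma> \<eta> t h \<and> Zstar N \<theta> \<Gamma> \<eta> t h \<le> 1"
proof -
  have "0 \<le> (\<Sum>j<N. \<Gamma> j h * real (Dstar N \<eta> t j))"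
    using assms(2) by (intro sum_nonneg) auto
  moreover have "(\<Sum>j<N. \<Gamma> j h * real (Dstar N \<eta> t j)) \<le> (\<Sum>j<N. \<Gamma> j h * real t)"
    using assms(2) Dstar_le by (intro sum_mono mult_left_mono) auto
  moreover have "(\<Sum>j<N. \<Gamma> j h * real t) \<le> real t"
    using assms(2,3) sum_nonneg[of "{..<N}" "\<lambda>j. \<Gamma> j h"]
    by (simp add: sum_distrib_right[symmetric] mult_left_le_one_le)
  ultimately show ?thesis
    unfolding Zstar_def using assms(1) by simp
qed

definition outcomes :: "nat \<Rightarrow> (nat \<Rightarrow> nat \<Rightarrow> nat) \<Rightarrow> nat \<Rightarrow> nat option set" where
  "outcomes N \<eta> t = insert None (Some ` drawn N \<eta> t)"

lemma finite_outcomes: "finite (outcomes N \<eta> t)"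
  by (simp add: outcomes_def finite_drawn)

lemma outcome_in_outcomes: "outcome N \<eta> t h \<in> outcomes N \<eta> t"
  by (simp add: outcomes_def outcome_def)

lemma sum_stepprob_eq_1:
  assumes "\<theta> h > 0" and "(\<Sum>j<N. W j h) = 1"
  shows "(\<Sum>y\<in>outcomes N \<eta> t. stepprob N \<theta> \<Gamma> W \<eta> t h y) = 1"
proof -
  have "(\<Sum>y\<in>outcomes N \<eta> t. stepprob N \<theta> \<Gamma> W \<eta> t h y)
      = stepprob N \<theta> \<Gamma> W \<eta> t h None + (\<Sum>y\<in>Some ` drawn N \<eta> t. stepprob N \<theta> \<Gamma> W \<eta> t h y)"
    unfolding outcomes_def by (rule sum.insert) (auto simp: finite_drawn)
  also have "(\<Sum>y\<in>Some ` drawn N \<eta> t. stepprob N \<theta> \<Gamma> W \<eta> t h y) = (\<Sum>c\<in>drawn N \<eta> t. Pold N \<theta> \<Gamma> W \<eta> t h c)"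
    by (subst sum.reindex) (auto simp: stepprob_def)
  finally show ?thesis
    using Zstar_add_sum_Pold[where \<theta>=\<theta> and h=h and N=N and W=W and \<Gamma>=\<Gamma> and \<eta>=\<eta> and t=t] assms
    by (simp add: stepprob_def)
qed

lemma prod_sum_stepprob_new_colour:
  assumes "j < N" and "\<And>h. h < N \<Longrightarrow> \<theta> h > 0" and "\<And>h. h < N \<Longrightarrow> (\<Sum>j<N. W j h) = 1"
  shows "(\<Prod>h<N. \<Sum>y\<in>(if h = j then {None} else outcomes N \<eta> t). stepprob N \<theta> \<Gamma> W \<eta> t h y)
    = Zstar N \<theta> \<Gamma> \<eta> t j"
proof -
  have "(\<Prod>h<N. \<Sum>y\<in>(if h = j then {None} else outcomes N \<eta> t). stepprob N \<theta> \<Gamma> W \<eta> t h y)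
      = (\<Prod>h<N. if h = j then Zstar N \<theta> \<Gamma> \<eta> t j else 1)"
  proof (rule prod.cong)
    fix h assume "h \<in> {..<N}"
    then show "(\<Sum>y\<in>(if h = j then {None} else outcomes N \<eta> t). stepprob N \<theta> \<Gamma> W \<eta> t h y)
        = (if h = j then Zstar N \<theta> \<Gamma> \<eta> t j else 1)"
      using sum_stepprob_eq_1[where \<theta>=\<theta> and h=h and N=N and W=W and \<Gamma>=\<Gamma> and \<eta>=\<eta> and t=t] assms(2,3)[of h]
      by (cases "h = j") (simp_all add: stepprob_def)
  qed simp
  with assms(1) show ?thesis by simp
qed

section \<open>Powers of a non-negative matrix\<close>

fun matpow :: "nat \<Rightarrow> (nat \<Rightarrow> nat \<Rightarrow> real) \<Rightarrow> nat \<Rightarrow> nat \<Rightarrow> nat \<Rightarrow> real" where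
  "matpow N G 0 i j = (if i = j then 1 else 0)"
| "matpow N G (Suc k) i j = (\<Sum>l<N. matpow N G k i l * G l j)"

lemma matpow_Suc_left:
  assumes "i < N" "j < N"
  shows "matpow N G (Suc k) i j = (\<Sum>l<N. G i l * matpow N G k l j)"
  using assms(2)
proof (induction k arbitrary: j)
  case 0
  have "(\<Sum>l<N. (if i = l then 1 else 0) * G l j) = (\<Sum>l<N. if i = l then G l j else 0)"
    by (rule sum.cong) auto
  moreover have "(\<Sum>l<N. G i l * (if l = j then 1 else 0)) = G i j"
    using 0 by (simp add: if_distrib sum.delta' cong: if_cong)
  ultimately show ?case using 0 assms(1) by (simp add: sum.delta')
next
  case (Suc k)
  have "matpow N G (Suc (Suc k)) i j = (\<Sum>m<N. matpow N G (Suc k) i m * G m j)"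
    by (simp only: matpow.simps(2))
  also have "\<dots> = (\<Sum>m<N. (\<Sum>l<N. G i l * matpow N G k l m) * G m j)"
    using Suc.IH by (intro sum.cong refl) (simp del: matpow.simps(2))
  also have "\<dots> = (\<Sum>l<N. G i l * (\<Sum>m<N. matpow N G k l m * G m j))"
    by (simp add: sum_distrib_left sum_distrib_right mult.assoc) (rule sum.swap)
  finally show ?case by simp
qed

lemma matpow_nonneg:
  "\<forall>i<N. \<forall>j<N. G i j \<ge> 0 \<Longrightarrow> i < N \<Longrightarrow> j < N \<Longrightarrow> matpow N G k i j \<ge> 0"
  by (induction k arbitrary: j) (auto intro!: sum_nonneg)

lemma matpow_divide: "matpow N (\<lambda>i j. G i j / a) k i j = matpow N G k i j / a ^ k"
  by (induction k arbitrary: j) (auto simp: sum_divide_distrib mult.commute)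

lemma index_pow_mat_of_real:
  assumes "i < N" "j < N"
  shows "(mat N N (\<lambda>(i, j). complex_of_real (G i j)) ^\<^sub>m k) $$ (i, j) = complex_of_real (matpow N G k i j)"
  using assms(2)
proof (induction k arbitrary: j)
  case (Suc k)
  let ?A = "mat N N (\<lambda>(i, j). complex_of_real (G i j))"
  have "(?A ^\<^sub>m Suc k) $$ (i, j) = row (?A ^\<^sub>m k) i \<bullet> col ?A j"
    using assms(1) Suc.prems by simp
  also have "\<dots> = (\<Sum>l<N. complex_of_real (matpow N G k i l) * complex_of_real (G l j))"
    unfolding scalar_prod_def using assms(1) Suc by (auto simp: lessThan_atLeast0 intro!: sum.cong)
  finally show ?case by simp
qed (use assms(1) in simp)

lemma spectral_radius_nonneg:
  assumes "A \<in> carrier_mat n n" "0 < n"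
  shows "0 \<le> spectral_radius A"
  using spectral_radius_mem_max(1)[OF assms] by auto

lemma smult_mat_mult_mat_vec:
  assumes "A \<in> carrier_mat n m" "v \<in> carrier_vec m"
  shows "(k \<cdot>\<^sub>m A) *\<^sub>v v = k \<cdot>\<^sub>v (A *\<^sub>v v)"
  using assms by (intro eq_vecI) (auto simp: scalar_prod_def sum_distrib_left ac_simps)

lemma spectral_radius_smult_less_1:
  fixes A :: "complex mat"
  assumes A: "A \<in> carrier_mat n n" and n: "0 < n" and r: "spectral_radius A < r"
  shows "spectral_radius (complex_of_real (1 / r) \<cdot>\<^sub>m A) < 1"
proof -
  let ?B = "complex_of_real (1 / r) \<cdot>\<^sub>m A"
  have r0: "0 < r" using spectral_radius_nonneg[OF A n] r by simp
  have B: "?B \<in> carrier_mat n n" using A by simp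
  obtain ev where ev: "ev \<in> spectrum ?B" and sr: "spectral_radius ?B = norm ev"
    using spectral_radius_mem_max(1)[OF B n] by auto
  obtain v where v: "eigenvector ?B v ev"
    using ev unfolding spectrum_def eigenvalue_def by auto
  then have vc: "v \<in> carrier_vec n" "v \<noteq> 0\<^sub>v n" "?B *\<^sub>v v = ev \<cdot>\<^sub>v v"
    unfolding eigenvector_def using A by auto
  have Av: "complex_of_real (1 / r) \<cdot>\<^sub>v (A *\<^sub>v v) = ev \<cdot>\<^sub>v v"
    using vc(3) by (simp only: smult_mat_mult_mat_vec[OF A vc(1)])
  have "A *\<^sub>v v = complex_of_real r \<cdot>\<^sub>v (complex_of_real (1 / r) \<cdot>\<^sub>v (A *\<^sub>v v))"
    using r0 by (simp add: smult_smult_assoc flip: of_real_mult)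
  also have "\<dots> = (complex_of_real r * ev) \<cdot>\<^sub>v v"
    unfolding Av smult_smult_assoc ..
  finally have "eigenvector A v (complex_of_real r * ev)"
    unfolding eigenvector_def using A vc by simp
  then have "norm (complex_of_real r * ev) \<le> spectral_radius A"
    using spectral_radius_mem_max(2)[OF A n] unfolding spectrum_def eigenvalue_def by blast
  then have "r * norm ev < r * 1"
    using r by (simp only: norm_mult norm_of_real abs_of_pos[OF r0])
  with sr show ?thesis using mult_less_cancel_left_pos[OF r0, of "norm ev" 1] by simp
qed

text \<open>The powers of \<open>\<Gamma>/r\<close> are bounded because \<open>\<Gamma>/r\<close> has spectral radius below 1.\<close>
lemma matpow_geometric_bound:
  assumes N: "0 < N" and r: "pf_eigenvalue N \<Gamma> < r"
  obtains c where "\<And>k i j. i < N \<Longrightarrow> j < N \<Longrightarrow> matpow N \<Gamma> k i j \<le> c * r ^ k"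
proof -
  define A where "A = mat N N (\<lambda>(i, j). complex_of_real (\<Gamma> i j))"
  define B where "B = mat N N (\<lambda>(i, j). complex_of_real (\<Gamma> i j / r))"
  have A: "A \<in> carrier_mat N N" unfolding A_def by simp
  have r0: "0 < r"
    using spectral_radius_nonneg[OF A N] r unfolding A_def pf_eigenvalue_def by simp
  have "B = complex_of_real (1 / r) \<cdot>\<^sub>m A"
    unfolding A_def B_def by (rule eq_matI) auto
  then have "spectral_radius B < 1"
    using spectral_radius_smult_less_1[OF A N] r unfolding pf_eigenvalue_def A_def by simp
  then obtain c where c: "\<And>k. norm_bound (B ^\<^sub>m k) c"
    using spectral_radius_jnf_norm_bound_less_1_upper_triangular[of B N] unfolding B_def by auto
  show ?thesis
  proof
    fix k i j assume ij: "i < N" "j < N"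
    have "norm ((B ^\<^sub>m k) $$ (i, j)) \<le> c"
      using c[of k] ij unfolding norm_bound_def B_def by auto
    then have "matpow N \<Gamma> k i j / r ^ k \<le> c"
      unfolding B_def index_pow_mat_of_real[OF ij] matpow_divide norm_of_real by linarith
    then show "matpow N \<Gamma> k i j \<le> c * r ^ k"
      using r0 by (simp add: divide_le_eq mult.commute)
  qed
qed

text \<open>The truncated Neumann series \<open>u = \<Sum>\<^sub>k\<^sub><\<^sub>K \<gamma>\<^sup>-\<^sup>k \<Gamma>\<^sup>k \<one>\<close> satisfies
  \<open>\<Gamma> u = \<gamma> (u - \<one> + \<gamma>\<^sup>-\<^sup>K \<Gamma>\<^sup>K \<one>)\<close>.\<close>
lemma subinvariant_vector_of_matpow_bound:
  assumes \<Gamma>: "\<forall>i<N. \<forall>j<N. \<Gamma> i j \<ge> 0" and \<gamma>: "0 < \<gamma>" and K: "0 < K"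
    and bound: "\<forall>i<N. (\<Sum>j<N. matpow N \<Gamma> K i j) \<le> \<gamma> ^ K"
  shows "\<exists>u. (\<forall>i<N. 1 \<le> u i) \<and> (\<forall>i<N. (\<Sum>j<N. \<Gamma> i j * u j) \<le> \<gamma> * u i)"
proof -
  define u where "u i = (\<Sum>k<K. \<Sum>j<N. matpow N \<Gamma> k i j / \<gamma> ^ k)" for i
  have u0: "u i = 1 + (\<Sum>k\<in>{1..<K}. \<Sum>j<N. matpow N \<Gamma> k i j / \<gamma> ^ k)" if "i < N" for i
    using K that unfolding u_def
    by (simp add: sum.atLeast_Suc_lessThan lessThan_atLeast0 sum.delta del: matpow.simps(2))
  have "1 \<le> u i" if "i < N" for i
    unfolding u0[OF that] using matpow_nonneg[OF \<Gamma>] that \<gamma>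
    by (simp del: matpow.simps(2)) (intro sum_nonneg divide_nonneg_pos, auto)
  moreover have "(\<Sum>j<N. \<Gamma> i j * u j) \<le> \<gamma> * u i" if i: "i < N" for i
  proof -
    have "(\<Sum>l<N. \<Gamma> i l * u l) = (\<Sum>k<K. \<Sum>j<N. (\<Sum>l<N. \<Gamma> i l * matpow N \<Gamma> k l j) / \<gamma> ^ k)"
      unfolding u_def
      by (simp add: sum_distrib_left sum_divide_distrib mult.assoc del: matpow.simps(2))
        (subst sum.swap, rule sum.cong, simp, subst sum.swap, simp)
    also have "\<dots> = (\<Sum>k<K. \<Sum>j<N. matpow N \<Gamma> (Suc k) i j / \<gamma> ^ k)"
      using i by (simp add: matpow_Suc_left del: matpow.simps(2))
    also have "\<dots> = \<gamma> * (\<Sum>k<K. \<Sum>j<N. matpow N \<Gamma> (Suc k) i j / \<gamma> ^ Suc k)"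
      using \<gamma> by (auto simp: sum_distrib_left simp del: matpow.simps intro!: sum.cong)
    also have "(\<Sum>k<K. \<Sum>j<N. matpow N \<Gamma> (Suc k) i j / \<gamma> ^ Suc k)
        = u i - 1 + (\<Sum>j<N. matpow N \<Gamma> K i j / \<gamma> ^ K)"
    proof -
      have "(\<Sum>j<N. matpow N \<Gamma> 0 i j / \<gamma> ^ 0) = 1"
        using i by (simp add: sum.delta)
      then have "(\<Sum>k<Suc K. \<Sum>j<N. matpow N \<Gamma> k i j / \<gamma> ^ k)
          = 1 + (\<Sum>k<K. \<Sum>j<N. matpow N \<Gamma> (Suc k) i j / \<gamma> ^ Suc k)"
        by (simp only: sum.lessThan_Suc_shift)
      then show ?thesis unfolding u_def by simp
    qed
    also have "(\<Sum>j<N. matpow N \<Gamma> K i j / \<gamma> ^ K) \<le> 1"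
      using bound i \<gamma> by (simp add: sum_divide_distrib[symmetric])
    finally show ?thesis using \<gamma> by (simp add: mult_left_mono)
  qed
  ultimately show ?thesis by blast
qed

lemma pf_subinvariant_vector:
  assumes N: "0 < N" and \<Gamma>: "\<forall>i<N. \<forall>j<N. \<Gamma> i j \<ge> 0" and \<gamma>: "pf_eigenvalue N \<Gamma> < \<gamma>"
  shows "\<exists>u. (\<forall>i<N. 1 \<le> u i) \<and> (\<forall>i<N. (\<Sum>j<N. \<Gamma> i j * u j) \<le> \<gamma> * u i)"
proof -
  define r where "r = (pf_eigenvalue N \<Gamma> + \<gamma>) / 2"
  have "0 \<le> pf_eigenvalue N \<Gamma>"
    unfolding pf_eigenvalue_def using N by (intro spectral_radius_nonneg) auto
  then have r: "pf_eigenvalue N \<Gamma> < r" "0 < r" "r < \<gamma>"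
    using \<gamma> unfolding r_def by auto
  obtain c where c: "\<And>k i j. i < N \<Longrightarrow> j < N \<Longrightarrow> matpow N \<Gamma> k i j \<le> c * r ^ k"
    using matpow_geometric_bound[OF N r(1)] by blast
  have pos: "0 < 1 / (\<bar>c\<bar> * real N + 1)"
    by (simp add: add_nonneg_pos)
  obtain K0 where K0: "(r / \<gamma>) ^ K0 < 1 / (\<bar>c\<bar> * real N + 1)"
    using real_arch_pow_inv[OF pos, of "r / \<gamma>"] r by auto
  have "(\<Sum>j<N. matpow N \<Gamma> (Suc K0) i j) \<le> \<gamma> ^ Suc K0" if i: "i < N" for i
  proof -
    have "matpow N \<Gamma> (Suc K0) i j \<le> \<bar>c\<bar> * r ^ Suc K0" if "j < N" for j
      by (rule order_trans[OF c[OF i that] mult_right_mono]) (use r in auto)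
    then have "(\<Sum>j<N. matpow N \<Gamma> (Suc K0) i j) \<le> (\<Sum>j<N. \<bar>c\<bar> * r ^ Suc K0)"
      by (intro sum_mono) auto
    also have "\<dots> = \<gamma> ^ Suc K0 * ((\<bar>c\<bar> * real N) * (r / \<gamma>) ^ Suc K0)"
      using r by (simp add: power_divide)
    also have "\<dots> \<le> \<gamma> ^ Suc K0 * ((\<bar>c\<bar> * real N) * (1 / (\<bar>c\<bar> * real N + 1)))"
      using r K0 power_decreasing[of K0 "Suc K0" "r / \<gamma>"]
      by (intro mult_left_mono) (auto intro!: mult_left_mono)
    also have "\<dots> \<le> \<gamma> ^ Suc K0"
      using r by (intro mult_left_le) (auto simp: divide_le_eq add_nonneg_pos)
    finally show ?thesis .
  qed
  then show ?thesis
    using subinvariant_vector_of_matpow_bound[OF \<Gamma>, of \<gamma> "Suc K0"] r by auto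
qed

section \<open>Growth estimates\<close>

lemma inverse_ln_Suc_le:
  fixes x :: real
  assumes "0 < x"
  shows "1 / (x + 1) \<le> ln (x + 1) - ln x"
proof -
  have "ln (x / (x + 1)) \<le> x / (x + 1) - 1"
    using assms by (intro ln_le_minus_one) auto
  also have "\<dots> = - (1 / (x + 1))"
    using assms by (simp add: field_simps)
  finally show ?thesis
    using assms by (simp add: ln_div)
qed

text \<open>A discrete Gronwall inequality: the relative increments \<open>c/t\<close> add up to at most
  \<open>c (ln t + 1)\<close>.\<close>
lemma le_powr_of_relative_increments:
  fixes q :: "nat \<Rightarrow> real"
  assumes c: "0 \<le> c" and q_nonneg: "\<And>t. 1 \<le> t \<Longrightarrow> 0 \<le> q t"
    and q_Suc: "\<And>t. 1 \<le> t \<Longrightarrow> q (Suc t) \<le> q t * (1 + c / real t)" and t: "1 \<le> t"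
  shows "q t \<le> q 1 * exp c * real t powr c"
proof -
  have "q t \<le> q 1 * exp (c * (ln (real t) + 1 - 1 / real t))"
    using t
  proof (induction t rule: dec_induct)
    case (step t)
    have "q (Suc t) \<le> q t * (1 + c / real t)"
      by (rule q_Suc) (use step.hyps in simp)
    also have "\<dots> \<le> q 1 * exp (c * (ln (real t) + 1 - 1 / real t)) * exp (c / real t)"
      using step q_nonneg[of t] q_nonneg[of 1] c by (intro mult_mono exp_ge_add_one_self) auto
    also have "\<dots> = q 1 * exp (c * (ln (real t) + 1))"
      by (simp add: exp_add[symmetric] algebra_simps)
    also have "\<dots> \<le> q 1 * exp (c * (ln (real (Suc t)) + 1 - 1 / real (Suc t)))"
      using inverse_ln_Suc_le[of "real t"] step.hyps(1) c q_nonneg[of 1]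
      by (intro mult_left_mono) (auto intro!: mult_left_mono simp: add.commute)
    finally show ?case .
  qed simp
  also have "\<dots> \<le> q 1 * exp (c * (ln (real t) + 1))"
    using q_nonneg[of 1] c by (intro mult_left_mono) (auto intro!: mult_left_mono)
  also have "\<dots> = q 1 * exp c * real t powr c"
    using t by (simp add: powr_def exp_add[symmetric] algebra_simps)
  finally show ?thesis .
qed

lemma zeta_Suc: "zeta g (Suc t) = zeta g t * inverse (1 - (1 - g) / real (Suc t))"
  unfolding zeta_def by (subst prod.nat_ivl_Suc') (auto simp: mult.commute)

lemma zeta_nonneg:
  assumes "0 \<le> g"
  shows "0 \<le> zeta g t"
  unfolding zeta_def
proof (intro prod_nonneg)
  fix k assume k: "k \<in> {1..t}"
  have "(1 - g) / real k \<le> 1"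
    using assms k by (cases "g \<le> 1") (auto simp: divide_le_eq)
  then show "0 \<le> inverse (1 - (1 - g) / real k)" by simp
qed

text \<open>\<open>\<zeta>\<^sub>t\<^sub>+\<^sub>1 / \<zeta>\<^sub>t = (t+1)/(t+g) \<le> 1 + (1-g)/t\<close>, so the Gronwall inequality applies.\<close>
lemma zeta_le_powr:
  assumes g: "0 < g" "g \<le> 1" and t: "1 \<le> t"
  shows "zeta g t \<le> exp (1 - g) / g * real t powr (1 - g)"
proof -
  have "zeta g (Suc t) \<le> zeta g t * (1 + (1 - g) / real t)" if t: "1 \<le> t" for t
  proof -
    have "inverse (1 - (1 - g) / real (Suc t)) = 1 + (1 - g) / (real t + g)"
      using g by (simp add: field_simps)
    also have "\<dots> \<le> 1 + (1 - g) / real t"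
      using g t by (simp add: divide_left_mono)
    finally show ?thesis
      unfolding zeta_Suc using zeta_nonneg[of g t] g by (intro mult_left_mono) auto
  qed
  then have "zeta g t \<le> zeta g 1 * exp (1 - g) * real t powr (1 - g)"
    using zeta_nonneg[of g] g t by (intro le_powr_of_relative_increments) auto
  then show ?thesis
    using g by (simp add: zeta_def field_simps)
qed

lemma zeta_weight_le_powr:
  assumes g: "0 < g" "g \<le> 1" and t: "1 \<le> t"
  shows "(zeta g (Suc t))\<^sup>2 / (real (Suc t))\<^sup>2 \<le> (exp (1 - g) / g)\<^sup>2 * real t powr (- 2 * g)"
proof -
  define Z where "Z = exp (1 - g) / g"
  have "zeta g (Suc t) \<le> Z * real (Suc t) powr (1 - g)"
    using zeta_le_powr[OF g, of "Suc t"] unfolding Z_def by simp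
  then have "zeta g (Suc t) / real (Suc t) \<le> Z * real (Suc t) powr (1 - g) / real (Suc t)"
    by (rule divide_right_mono) simp
  also have "\<dots> = Z * real (Suc t) powr (- g)"
    by (simp add: powr_diff powr_minus divide_inverse)
  also have "\<dots> \<le> Z * real t powr (- g)"
    using g t unfolding Z_def by (intro mult_left_mono powr_mono2') auto
  finally have "(zeta g (Suc t) / real (Suc t))\<^sup>2 \<le> (Z * real t powr (- g))\<^sup>2"
    using zeta_nonneg[of g "Suc t"] g by (intro power_mono) auto
  moreover have "(Z * real t powr (- g))\<^sup>2 = Z\<^sup>2 * real t powr (- 2 * g)"
    by (simp add: power2_eq_square powr_add[symmetric])
  ultimately show ?thesis
    by (simp only: Z_def[symmetric] power_divide)
qed

lemma AE_summable_if_summable_integral: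
  fixes f :: "nat \<Rightarrow> 'a \<Rightarrow> real"
  assumes int: "\<And>t. integrable M (f t)" and nonneg: "\<And>t x. x \<in> space M \<Longrightarrow> 0 \<le> f t x"
    and summable: "summable (\<lambda>t. integral\<^sup>L M (f t))"
  shows "AE x in M. summable (\<lambda>t. f t x)"
proof -
  have int_nonneg: "0 \<le> integral\<^sup>L M (f t)" for t
    using nonneg by (intro integral_nonneg_AE) auto
  have "(\<integral>\<^sup>+x. (\<Sum>t. ennreal (f t x)) \<partial>M) = (\<Sum>t. \<integral>\<^sup>+x. ennreal (f t x) \<partial>M)"
    using int by (intro nn_integral_suminf) auto
  also have "\<dots> = (\<Sum>t. ennreal (integral\<^sup>L M (f t)))"
    using int nonneg by (simp add: nn_integral_eq_integral)
  also have "\<dots> = ennreal (\<Sum>t. integral\<^sup>L M (f t))"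
    using int_nonneg summable by (intro suminf_ennreal2) auto
  finally have "(\<integral>\<^sup>+x. (\<Sum>t. ennreal (f t x)) \<partial>M) \<noteq> \<infinity>" by simp
  then have "AE x in M. (\<Sum>t. ennreal (f t x)) \<noteq> \<infinity>"
    using int by (intro nn_integral_PInf_AE) auto
  then show ?thesis
  proof (rule AE_mp, intro AE_I2 impI)
    fix x assume "x \<in> space M" "(\<Sum>t. ennreal (f t x)) \<noteq> \<infinity>"
    then show "summable (\<lambda>t. f t x)"
      using nonneg by (intro summable_suminf_not_top) auto
  qed
qed

section \<open>The interacting innovation process\<close>

locale innovation_process = prob_space M for M :: "'w measure" +
  fixes N :: nat and \<theta> :: "nat \<Rightarrow> real" and \<Gamma> W :: "nat \<Rightarrow> nat \<Rightarrow> real"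
    and C :: "nat \<Rightarrow> nat \<Rightarrow> 'w \<Rightarrow> nat"
  assumes measurable_C: "\<And>n h. C n h \<in> measurable M (count_space UNIV)"
    and conditional_law: "\<And>t \<eta> y. measure M {\<omega> \<in> histev M N C t \<eta>. \<forall>h<N. outcome N (\<lambda>n k. C n k \<omega>) t h = y h}
        = measure M (histev M N C t \<eta>) * (\<Prod>h<N. stepprob N \<theta> \<Gamma> W \<eta> t h (y h))"
    and theta_pos: "\<And>h. h < N \<Longrightarrow> 0 < \<theta> h"
    and W_cols: "\<And>h. h < N \<Longrightarrow> (\<Sum>j<N. W j h) = 1"
    and Gamma_nonneg: "\<And>j h. j < N \<Longrightarrow> h < N \<Longrightarrow> 0 \<le> \<Gamma> j h"
    and Gamma_cols: "\<And>h. h < N \<Longrightarrow> (\<Sum>j<N. \<Gamma> j h) \<le> 1"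
begin

definition history :: "nat \<Rightarrow> 'w \<Rightarrow> (nat \<Rightarrow> nat \<Rightarrow> nat)" where
  "history T \<omega> = hist_window N T (\<lambda>n k. C n k \<omega>)"

abbreviation H :: "nat \<Rightarrow> (nat \<Rightarrow> nat \<Rightarrow> nat) \<Rightarrow> 'w set" where
  "H T \<eta> \<equiv> histev M N C T \<eta>"

lemma histev_eq: "H T \<eta> = {\<omega> \<in> space M. history T \<omega> = hist_window N T \<eta>}"
  unfolding histev_def history_def hist_window_def by (auto simp: fun_eq_iff)

lemma sets_histev: "H T \<eta> \<in> sets M"
proof -
  have "H T \<eta> = {\<omega> \<in> space M. \<forall>p\<in>{1..T} \<times> {..<N}. C (fst p) (snd p) \<omega> = \<eta> (fst p) (snd p)}"
    unfolding histev_def by auto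
  also have "\<dots> \<in> sets M"
  proof (rule sets.sets_Collect_finite_All)
    fix p
    have "C (fst p) (snd p) -` {\<eta> (fst p) (snd p)} \<inter> space M \<in> sets M"
      by (rule measurable_sets[OF measurable_C]) auto
    then show "{\<omega> \<in> space M. C (fst p) (snd p) \<omega> = \<eta> (fst p) (snd p)} \<in> sets M"
      by (simp add: vimage_def Int_def conj_commute)
  qed auto
  finally show ?thesis .
qed

lemma measurable_history: "history T \<in> measurable M (count_space (range (hist_window N T)))"
proof (subst measurable_count_space_eq_countable[OF countable_range_hist_window], intro conjI ballI)
  show "history T \<in> space M \<rightarrow> range (hist_window N T)"
    unfolding history_def by auto
  fix \<eta> assume "\<eta> \<in> range (hist_window N T)"
  then have "history T -` {\<eta>} \<inter> space M = H T \<eta>"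
    unfolding histev_eq hist_window_range[OF \<open>\<eta> \<in> _\<close>] by auto
  then show "history T -` {\<eta>} \<inter> space M \<in> sets M"
    using sets_histev by simp
qed

lemma sets_Collect_history: "{\<omega> \<in> space M. P (history T \<omega>)} \<in> sets M"
proof -
  have "history T -` {\<eta> \<in> range (hist_window N T). P \<eta>} \<inter> space M \<in> sets M"
    by (rule measurable_sets[OF measurable_history]) auto
  moreover have "history T -` {\<eta> \<in> range (hist_window N T). P \<eta>} \<inter> space M
      = {\<omega> \<in> space M. P (history T \<omega>)}"
    unfolding history_def by auto
  ultimately show ?thesis by simp
qed

lemma borel_measurable_history: "(\<lambda>\<omega>. f (history T \<omega>) :: real) \<in> borel_measurable M"
  by (rule measurable_compose[OF measurable_history]) simp

lemma nn_integral_split_histev: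
  assumes "f \<in> borel_measurable M"
  shows "(\<integral>\<^sup>+\<omega>. f \<omega> \<partial>M)
       = (\<integral>\<^sup>+\<eta>. (\<integral>\<^sup>+\<omega>. f \<omega> * indicator (H T \<eta>) \<omega> \<partial>M) \<partial>count_space (range (hist_window N T)))"
proof -
  have pointwise: "f \<omega> = (\<integral>\<^sup>+\<eta>. f \<omega> * indicator (H T \<eta>) \<omega> \<partial>count_space (range (hist_window N T)))"
    if \<omega>: "\<omega> \<in> space M" for \<omega>
  proof -
    have h: "history T \<omega> \<in> range (hist_window N T)"
      unfolding history_def by auto
    have "(\<integral>\<^sup>+\<eta>. f \<omega> * indicator (H T \<eta>) \<omega> \<partial>count_space (range (hist_window N T)))
        = (\<integral>\<^sup>+\<eta>. f \<omega> * indicator {history T \<omega>} \<eta> \<partial>count_space (range (hist_window N T)))"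
    proof (rule nn_integral_cong)
      fix \<eta> assume "\<eta> \<in> space (count_space (range (hist_window N T)))"
      then have "hist_window N T \<eta> = \<eta>"
        by (intro hist_window_range) simp
      with \<omega> have "\<omega> \<in> H T \<eta> \<longleftrightarrow> \<eta> \<in> {history T \<omega>}"
        unfolding histev_eq by auto
      then show "f \<omega> * indicator (H T \<eta>) \<omega> = f \<omega> * indicator {history T \<omega>} \<eta>"
        unfolding indicator_def by simp
    qed
    also have "\<dots> = f \<omega> * emeasure (count_space (range (hist_window N T))) {history T \<omega>}"
      by (rule nn_integral_cmult_indicator) (use h in auto)
    also have "\<dots> = f \<omega>"
      using h by simp
    finally show ?thesis by (rule sym)
  qed
  have "(\<integral>\<^sup>+\<omega>. f \<omega> \<partial>M)
      = (\<integral>\<^sup>+\<omega>. (\<integral>\<^sup>+\<eta>. f \<omega> * indicator (H T \<eta>) \<omega> \<partial>count_space (range (hist_window N T))) \<partial>M)"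
    by (rule nn_integral_cong) (rule pointwise)
  also have "\<dots> = (\<integral>\<^sup>+\<eta>. (\<integral>\<^sup>+\<omega>. f \<omega> * indicator (H T \<eta>) \<omega> \<partial>M) \<partial>count_space (range (hist_window N T)))"
    by (rule nn_integral_count_space_nn_integral[OF countable_range_hist_window])
      (rule borel_measurable_times_ennreal[OF assms borel_measurable_indicator[OF sets_histev]])
  finally show ?thesis .
qed

lemma nn_integral_mono_on_histev:
  assumes "f \<in> borel_measurable M" "g \<in> borel_measurable M"
    and "\<And>\<eta>. \<eta> \<in> range (hist_window N T) \<Longrightarrow>
      (\<integral>\<^sup>+\<omega>. f \<omega> * indicator (H T \<eta>) \<omega> \<partial>M) \<le> (\<integral>\<^sup>+\<omega>. g \<omega> * indicator (H T \<eta>) \<omega> \<partial>M)"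
  shows "(\<integral>\<^sup>+\<omega>. f \<omega> \<partial>M) \<le> (\<integral>\<^sup>+\<omega>. g \<omega> \<partial>M)"
proof -
  have "(\<integral>\<^sup>+\<omega>. f \<omega> \<partial>M)
      = (\<integral>\<^sup>+\<eta>. (\<integral>\<^sup>+\<omega>. f \<omega> * indicator (H T \<eta>) \<omega> \<partial>M) \<partial>count_space (range (hist_window N T)))"
    by (rule nn_integral_split_histev[OF assms(1)])
  also have "\<dots> \<le> (\<integral>\<^sup>+\<eta>. (\<integral>\<^sup>+\<omega>. g \<omega> * indicator (H T \<eta>) \<omega> \<partial>M) \<partial>count_space (range (hist_window N T)))"
    by (rule nn_integral_mono, rule assms(3)) simp
  also have "\<dots> = (\<integral>\<^sup>+\<omega>. g \<omega> \<partial>M)"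
    by (rule nn_integral_split_histev[OF assms(2), symmetric])
  finally show ?thesis .
qed

lemma Zstar_history: "Zstar N \<theta> \<Gamma> (\<lambda>n k. C n k \<omega>) t j = Zstar N \<theta> \<Gamma> (history t \<omega>) t j"
  unfolding history_def Zstar_hist_window ..

lemma Dstar_history: "Dstar N (\<lambda>n k. C n k \<omega>) t j = Dstar N (history t \<omega>) t j"
  unfolding history_def Dstar_hist_window ..

lemma borel_measurable_Zstar: "(\<lambda>\<omega>. Zstar N \<theta> \<Gamma> (\<lambda>n k. C n k \<omega>) t j) \<in> borel_measurable M"
  unfolding Zstar_history by (rule borel_measurable_history)

lemma borel_measurable_Dstar: "(\<lambda>\<omega>. real (Dstar N (\<lambda>n k. C n k \<omega>) t j)) \<in> borel_measurable M"
  unfolding Dstar_history by (rule borel_measurable_history)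

lemma Zstar_bounds: "j < N \<Longrightarrow> 0 \<le> Zstar N \<theta> \<Gamma> \<eta> t j \<and> Zstar N \<theta> \<Gamma> \<eta> t j \<le> 1"
  using Zstar_nonneg_le_1 theta_pos Gamma_nonneg Gamma_cols by blast

lemma integrable_Zstar: "j < N \<Longrightarrow> integrable M (\<lambda>\<omega>. Zstar N \<theta> \<Gamma> (\<lambda>n k. C n k \<omega>) t j)"
  using Zstar_bounds borel_measurable_Zstar by (intro integrable_const_bound[where B=1]) auto

lemma integrable_Dstar: "integrable M (\<lambda>\<omega>. real (Dstar N (\<lambda>n k. C n k \<omega>) t j))"
  using Dstar_le borel_measurable_Dstar by (intro integrable_const_bound[where B="real t"]) auto

lemma sets_new_colour: "j < N \<Longrightarrow> {\<omega> \<in> space M. outcome N (\<lambda>n k. C n k \<omega>) t j = None} \<in> sets M"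
  using sets_Collect_history[of "\<lambda>\<eta>. outcome N \<eta> t j = None" "Suc t"]
  by (simp add: history_def outcome_hist_window)

definition outcome_event :: "nat \<Rightarrow> (nat \<Rightarrow> nat \<Rightarrow> nat) \<Rightarrow> (nat \<Rightarrow> nat option) \<Rightarrow> 'w set" where
  "outcome_event t \<eta> y = {\<omega> \<in> H t \<eta>. \<forall>h<N. outcome N (\<lambda>n k. C n k \<omega>) t h = y h}"

lemma sets_outcome_event: "outcome_event t \<eta> y \<in> sets M"
proof -
  have "outcome_event t \<eta> y = {\<omega> \<in> space M. hist_window N t (history (Suc t) \<omega>) = hist_window N t \<eta>
      \<and> (\<forall>h<N. outcome N (history (Suc t) \<omega>) t h = y h)}"
    unfolding outcome_event_def histev_eq history_def
    by (auto simp: hist_window_hist_window outcome_hist_window)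
  then show ?thesis using sets_Collect_history by simp
qed

lemma new_colour_inter_histev_subset:
  assumes "\<eta> \<in> range (hist_window N t)"
  shows "{\<omega> \<in> space M. outcome N (\<lambda>n k. C n k \<omega>) t j = None} \<inter> H t \<eta>
    \<subseteq> (\<Union>y\<in>PiE {..<N} (\<lambda>h. if h = j then {None} else outcomes N \<eta> t). outcome_event t \<eta> y)"
proof safe
  fix \<omega> assume \<omega>: "\<omega> \<in> space M" "outcome N (\<lambda>n k. C n k \<omega>) t j = None" "\<omega> \<in> H t \<eta>"
  have "outcomes N (\<lambda>n k. C n k \<omega>) t = outcomes N \<eta> t"
    using \<omega>(3) drawn_hist_window[of N t "\<lambda>n k. C n k \<omega>"]
    by (simp add: outcomes_def histev_eq history_def hist_window_range[OF assms])
  then have "restrict (outcome N (\<lambda>n k. C n k \<omega>) t) {..<N}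
      \<in> PiE {..<N} (\<lambda>h. if h = j then {None} else outcomes N \<eta> t)"
    using \<omega>(2) outcome_in_outcomes[of N "\<lambda>n k. C n k \<omega>" t] by (auto intro!: PiE_I)
  moreover have "\<omega> \<in> outcome_event t \<eta> (restrict (outcome N (\<lambda>n k. C n k \<omega>) t) {..<N})"
    using \<omega> by (simp add: outcome_event_def)
  ultimately show "\<omega> \<in> (\<Union>y\<in>PiE {..<N} (\<lambda>h. if h = j then {None} else outcomes N \<eta> t). outcome_event t \<eta> y)"
    by blast
qed

text \<open>Only the factor \<open>Z\<^sup>*\<^sub>t\<^sub>,\<^sub>j\<close> of the conditional law survives summation over the outcomes of the
  other urns.\<close>
lemma measure_new_colour_inter_histev_le:
  assumes j: "j < N" and \<eta>: "\<eta> \<in> range (hist_window N t)"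
  shows "measure M ({\<omega> \<in> space M. outcome N (\<lambda>n k. C n k \<omega>) t j = None} \<inter> H t \<eta>)
     \<le> measure M (H t \<eta>) * Zstar N \<theta> \<Gamma> \<eta> t j"
proof -
  define A where "A h = (if h = j then {None} else outcomes N \<eta> t)" for h
  have finite_A: "finite (A h)" for h
    by (simp add: A_def finite_outcomes)
  have "(\<Union>y\<in>PiE {..<N} A. outcome_event t \<eta> y) \<in> sets M"
    using finite_A sets_outcome_event by (intro sets.finite_UN finite_PiE) auto
  then have "measure M ({\<omega> \<in> space M. outcome N (\<lambda>n k. C n k \<omega>) t j = None} \<inter> H t \<eta>)
      \<le> (\<Sum>y\<in>PiE {..<N} A. measure M (outcome_event t \<eta> y))"
    using new_colour_inter_histev_subset[OF \<eta>, of j] finite_A sets_outcome_event unfolding A_def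
    by (intro order_trans[OF finite_measure_mono finite_measure_subadditive_finite] finite_PiE) auto
  also have "\<dots> = measure M (H t \<eta>) * (\<Prod>h<N. \<Sum>y\<in>A h. stepprob N \<theta> \<Gamma> W \<eta> t h y)"
    unfolding outcome_event_def conditional_law
    by (simp add: sum_distrib_left prod_sum_PiE finite_A)
  also have "(\<Prod>h<N. \<Sum>y\<in>A h. stepprob N \<theta> \<Gamma> W \<eta> t h y) = Zstar N \<theta> \<Gamma> \<eta> t j"
    unfolding A_def using j theta_pos W_cols by (rule prod_sum_stepprob_new_colour)
  finally show ?thesis .
qed

lemma prob_new_colour_le:
  assumes j: "j < N"
  shows "measure M {\<omega> \<in> space M. outcome N (\<lambda>n k. C n k \<omega>) t j = None}
     \<le> (\<integral>\<omega>. Zstar N \<theta> \<Gamma> (\<lambda>n k. C n k \<omega>) t j \<partial>M)"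
proof -
  define E where "E = {\<omega> \<in> space M. outcome N (\<lambda>n k. C n k \<omega>) t j = None}"
  define Z where "Z \<omega> = Zstar N \<theta> \<Gamma> (\<lambda>n k. C n k \<omega>) t j" for \<omega>
  have E: "E \<in> sets M"
    unfolding E_def using sets_new_colour[OF j] .
  have Z: "0 \<le> Z \<omega>" for \<omega>
    unfolding Z_def using Zstar_bounds[OF j] by simp
  have "ennreal (measure M E) = (\<integral>\<^sup>+\<omega>. indicator E \<omega> \<partial>M)"
    using E by (simp add: emeasure_eq_measure)
  also have "\<dots> \<le> (\<integral>\<^sup>+\<omega>. ennreal (Z \<omega>) \<partial>M)"
  proof (rule nn_integral_mono_on_histev)
    fix \<eta> assume \<eta>: "\<eta> \<in> range (hist_window N t)"
    have "Z \<omega> = Zstar N \<theta> \<Gamma> \<eta> t j" if "\<omega> \<in> H t \<eta>" for \<omega>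
      using that unfolding Z_def Zstar_history histev_eq hist_window_range[OF \<eta>] by simp
    then have "(\<integral>\<^sup>+\<omega>. ennreal (Z \<omega>) * indicator (H t \<eta>) \<omega> \<partial>M)
        = (\<integral>\<^sup>+\<omega>. ennreal (Zstar N \<theta> \<Gamma> \<eta> t j) * indicator (H t \<eta>) \<omega> \<partial>M)"
      by (intro nn_integral_cong) (simp split: split_indicator)
    also have "\<dots> = ennreal (measure M (H t \<eta>) * Zstar N \<theta> \<Gamma> \<eta> t j)"
      using sets_histev Zstar_bounds[OF j]
      by (simp add: nn_integral_cmult_indicator emeasure_eq_measure ennreal_mult mult.commute)
    finally have "ennreal (measure M (E \<inter> H t \<eta>)) \<le> (\<integral>\<^sup>+\<omega>. ennreal (Z \<omega>) * indicator (H t \<eta>) \<omega> \<partial>M)"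
      using measure_new_colour_inter_histev_le[OF j \<eta>] unfolding E_def by (simp add: ennreal_leI)
    then show "(\<integral>\<^sup>+\<omega>. indicator E \<omega> * indicator (H t \<eta>) \<omega> \<partial>M) \<le> (\<integral>\<^sup>+\<omega>. ennreal (Z \<omega>) * indicator (H t \<eta>) \<omega> \<partial>M)"
      using E sets_histev by (simp add: indicator_inter_arith[symmetric] emeasure_eq_measure)
  qed (use E borel_measurable_Zstar in \<open>auto simp: Z_def\<close>)
  also have "\<dots> = ennreal (\<integral>\<omega>. Z \<omega> \<partial>M)"
    using integrable_Zstar[OF j] Z unfolding Z_def by (intro nn_integral_eq_integral) auto
  finally show ?thesis
    unfolding E_def Z_def using Z by (simp add: integral_nonneg_AE Z_def)
qed

lemma expectation_Dstar_Suc_le: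
  assumes j: "j < N"
  shows "(\<integral>\<omega>. real (Dstar N (\<lambda>n k. C n k \<omega>) (Suc t) j) \<partial>M)
     \<le> (\<integral>\<omega>. real (Dstar N (\<lambda>n k. C n k \<omega>) t j) \<partial>M) + (\<integral>\<omega>. Zstar N \<theta> \<Gamma> (\<lambda>n k. C n k \<omega>) t j \<partial>M)"
proof -
  define E where "E = {\<omega> \<in> space M. outcome N (\<lambda>n k. C n k \<omega>) t j = None}"
  have E: "E \<in> sets M"
    unfolding E_def using sets_new_colour[OF j] .
  then have integrable_E: "integrable M (indicator E :: 'w \<Rightarrow> real)"
    by (intro integrable_const_bound[where B=1]) auto
  have "(\<integral>\<omega>. real (Dstar N (\<lambda>n k. C n k \<omega>) (Suc t) j) \<partial>M)
      \<le> (\<integral>\<omega>. real (Dstar N (\<lambda>n k. C n k \<omega>) t j) + indicator E \<omega> \<partial>M)"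
  proof (rule integral_mono)
    fix \<omega> assume "\<omega> \<in> space M"
    then show "real (Dstar N (\<lambda>n k. C n k \<omega>) (Suc t) j) \<le> real (Dstar N (\<lambda>n k. C n k \<omega>) t j) + indicator E \<omega>"
      using Dstar_Suc_le[of N "\<lambda>n k. C n k \<omega>" t j] unfolding E_def by (auto split: if_splits)
  qed (use integrable_Dstar integrable_E in auto)
  also have "\<dots> = (\<integral>\<omega>. real (Dstar N (\<lambda>n k. C n k \<omega>) t j) \<partial>M) + measure M E"
    using integrable_Dstar integrable_E E by simp
  finally show ?thesis
    using prob_new_colour_le[OF j, of t] unfolding E_def by linarith
qed

lemma expectation_Zstar:
  "(\<integral>\<omega>. Zstar N \<theta> \<Gamma> (\<lambda>n k. C n k \<omega>) t j \<partial>M)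
     = (\<theta> j + (\<Sum>i<N. \<Gamma> i j * (\<integral>\<omega>. real (Dstar N (\<lambda>n k. C n k \<omega>) t i) \<partial>M))) / (\<theta> j + real t)"
  unfolding Zstar_def using integrable_Dstar by (simp add: Bochner_Integration.integral_sum prob_space)

lemma Vstar_bounds:
  "0 \<le> Vstar N \<theta> \<Gamma> C t \<omega>" "Vstar N \<theta> \<Gamma> C t \<omega> \<le> (\<Sum>j<N. Zstar N \<theta> \<Gamma> (\<lambda>n k. C n k \<omega>) t j)"
  using Zstar_bounds unfolding Vstar_def by (auto intro!: sum_nonneg sum_mono simp: mult_left_le)

lemma integrable_Vstar: "integrable M (Vstar N \<theta> \<Gamma> C t)"
proof (rule integrable_const_bound[where B="real N"])
  have "(\<Sum>j<N. Zstar N \<theta> \<Gamma> (\<lambda>n k. C n k \<omega>) t j) \<le> (\<Sum>j<N. 1)" for \<omega>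
    using Zstar_bounds by (intro sum_mono) auto
  then have "Vstar N \<theta> \<Gamma> C t \<omega> \<le> real N" for \<omega>
    using Vstar_bounds(2)[of t \<omega>] by (simp add: order_trans)
  then show "AE \<omega> in M. norm (Vstar N \<theta> \<Gamma> C t \<omega>) \<le> real N"
    using Vstar_bounds(1) by simp
  show "Vstar N \<theta> \<Gamma> C t \<in> borel_measurable M"
    unfolding Vstar_def using borel_measurable_Zstar by measurable
qed

lemma expectation_Vstar_le:
  "integral\<^sup>L M (Vstar N \<theta> \<Gamma> C t) \<le> (\<Sum>j<N. \<integral>\<omega>. Zstar N \<theta> \<Gamma> (\<lambda>n k. C n k \<omega>) t j \<partial>M)"
proof -
  have "integral\<^sup>L M (Vstar N \<theta> \<Gamma> C t) \<le> (\<integral>\<omega>. (\<Sum>j<N. Zstar N \<theta> \<Gamma> (\<lambda>n k. C n k \<omega>) t j) \<partial>M)"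
    using integrable_Zstar Vstar_bounds(2) by (intro integral_mono integrable_Vstar) auto
  then show ?thesis
    using integrable_Zstar by (simp add: Bochner_Integration.integral_sum)
qed

text \<open>In other words, \<open>s\<^sub>t + B/\<gamma>\<close> with \<open>B = \<Sum>\<^sub>j u\<^sub>j \<theta>\<^sub>j\<close> grows by a factor at most
  \<open>1 + \<gamma>/t\<close> per step.\<close>
lemma weighted_expectation_Dstar_Suc_le:
  assumes u: "\<forall>i<N. 0 \<le> u i" "\<forall>i<N. (\<Sum>j<N. \<Gamma> i j * u j) \<le> \<gamma> * u i" and t: "1 \<le> t"
  defines "s \<equiv> \<lambda>T. \<Sum>j<N. u j * (\<integral>\<omega>. real (Dstar N (\<lambda>n k. C n k \<omega>) T j) \<partial>M)"
  shows "s (Suc t) \<le> s t + ((\<Sum>j<N. u j * \<theta> j) + \<gamma> * s t) / real t"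
proof -
  define a where "a t i = (\<integral>\<omega>. real (Dstar N (\<lambda>n k. C n k \<omega>) t i) \<partial>M)" for t i
  have a_nonneg: "0 \<le> a t i" for t i
    unfolding a_def by (intro integral_nonneg_AE) auto
  define new where "new j = \<theta> j + (\<Sum>i<N. \<Gamma> i j * a t i)" for j
  have "a (Suc t) j \<le> a t j + new j / real t" if j: "j < N" for j
  proof -
    have "0 \<le> new j"
      unfolding new_def using theta_pos[OF j] Gamma_nonneg j a_nonneg
      by (intro add_nonneg_nonneg sum_nonneg mult_nonneg_nonneg) auto
    then have "new j / (\<theta> j + real t) \<le> new j / real t"
      using theta_pos[OF j] t by (intro divide_left_mono) auto
    then show ?thesis
      using expectation_Dstar_Suc_le[OF j, of t] expectation_Zstar[of t j] unfolding a_def new_def by linarith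
  qed
  then have "s (Suc t) \<le> (\<Sum>j<N. u j * (a t j + new j / real t))"
    unfolding s_def a_def[symmetric] using u(1) by (intro sum_mono mult_left_mono) auto
  also have "\<dots> = s t + (\<Sum>j<N. u j * new j) / real t"
    unfolding s_def a_def[symmetric] by (simp add: distrib_left sum.distrib sum_divide_distrib)
  also have "(\<Sum>j<N. u j * new j) = (\<Sum>j<N. u j * \<theta> j) + (\<Sum>j<N. u j * (\<Sum>i<N. \<Gamma> i j * a t i))"
    unfolding new_def by (simp add: distrib_left sum.distrib)
  also have "(\<Sum>j<N. u j * (\<Sum>i<N. \<Gamma> i j * a t i)) = (\<Sum>i<N. a t i * (\<Sum>j<N. \<Gamma> i j * u j))"
    by (simp add: sum_distrib_left mult_ac) (rule sum.swap)
  also have "(\<Sum>i<N. a t i * (\<Sum>j<N. \<Gamma> i j * u j)) \<le> (\<Sum>i<N. a t i * (\<gamma> * u i))"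
    using u(2) a_nonneg by (intro sum_mono mult_left_mono) auto
  also have "\<dots> = \<gamma> * s t"
    unfolding s_def a_def[symmetric] by (simp add: sum_distrib_left mult_ac)
  finally show ?thesis
    using t by (simp add: divide_right_mono)
qed

lemma expectation_Dstar_le_powr:
  assumes \<gamma>: "0 < \<gamma>" and u: "\<forall>i<N. 1 \<le> u i" "\<forall>i<N. (\<Sum>j<N. \<Gamma> i j * u j) \<le> \<gamma> * u i"
  obtains K where "0 \<le> K" and "\<And>t i. 1 \<le> t \<Longrightarrow> i < N \<Longrightarrow>
    (\<integral>\<omega>. real (Dstar N (\<lambda>n k. C n k \<omega>) t i) \<partial>M) \<le> K * real t powr \<gamma>"
proof -
  define s where "s t = (\<Sum>j<N. u j * (\<integral>\<omega>. real (Dstar N (\<lambda>n k. C n k \<omega>) t j) \<partial>M))" for t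
  define B where "B = (\<Sum>j<N. u j * \<theta> j)"
  define q where "q t = s t + B / \<gamma>" for t
  have u0: "\<forall>i<N. 0 \<le> u i"
    using u(1) by (auto intro: order_trans[OF zero_le_one])
  have a_nonneg: "0 \<le> (\<integral>\<omega>. real (Dstar N (\<lambda>n k. C n k \<omega>) t i) \<partial>M)" for t i
    by (intro integral_nonneg_AE) auto
  have s_nonneg: "0 \<le> s t" for t
    unfolding s_def using u0 a_nonneg by (intro sum_nonneg mult_nonneg_nonneg) auto
  have B_nonneg: "0 \<le> B"
    unfolding B_def using u0 theta_pos by (intro sum_nonneg mult_nonneg_nonneg) (auto intro: less_imp_le)
  have "q (Suc t) \<le> q t * (1 + \<gamma> / real t)" if t: "1 \<le> t" for t
  proof -
    have "q (Suc t) \<le> s t + (B + \<gamma> * s t) / real t + B / \<gamma>"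
      using weighted_expectation_Dstar_Suc_le[OF u0 u(2) t] unfolding q_def s_def B_def by simp
    also have "\<dots> = q t * (1 + \<gamma> / real t)"
      using \<gamma> t unfolding q_def by (simp add: field_simps)
    finally show ?thesis .
  qed
  then have q_le: "q t \<le> q 1 * exp \<gamma> * real t powr \<gamma>" if "1 \<le> t" for t
    using that \<gamma> s_nonneg B_nonneg unfolding q_def
    by (intro le_powr_of_relative_increments) (auto simp: q_def)
  show ?thesis
  proof (rule that)
    show "0 \<le> q 1 * exp \<gamma>"
      using s_nonneg B_nonneg \<gamma> unfolding q_def by simp
    fix t i :: nat assume t: "1 \<le> t" and i: "i < N"
    have "(\<integral>\<omega>. real (Dstar N (\<lambda>n k. C n k \<omega>) t i) \<partial>M) \<le> u i * (\<integral>\<omega>. real (Dstar N (\<lambda>n k. C n k \<omega>) t i) \<partial>M)"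
      using mult_right_mono[of 1 "u i", OF _ a_nonneg[of t i]] u(1) i by simp
    also have "\<dots> \<le> s t"
      unfolding s_def using i u0 a_nonneg by (intro member_le_sum) auto
    also have "\<dots> \<le> q t"
      unfolding q_def using B_nonneg \<gamma> by simp
    finally show "(\<integral>\<omega>. real (Dstar N (\<lambda>n k. C n k \<omega>) t i) \<partial>M) \<le> q 1 * exp \<gamma> * real t powr \<gamma>"
      using q_le[OF t] by linarith
  qed
qed

lemma expectation_Zstar_le_powr:
  assumes \<gamma>: "0 \<le> \<gamma>" and K: "0 \<le> K" and t: "1 \<le> t" and j: "j < N"
    and D: "\<And>i. i < N \<Longrightarrow> (\<integral>\<omega>. real (Dstar N (\<lambda>n k. C n k \<omega>) t i) \<partial>M) \<le> K * real t powr \<gamma>"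
  shows "(\<integral>\<omega>. Zstar N \<theta> \<Gamma> (\<lambda>n k. C n k \<omega>) t j \<partial>M) \<le> (\<theta> j + K) * real t powr (\<gamma> - 1)"
proof -
  let ?new = "\<theta> j + (\<Sum>i<N. \<Gamma> i j * (\<integral>\<omega>. real (Dstar N (\<lambda>n k. C n k \<omega>) t i) \<partial>M))"
  have "(\<Sum>i<N. \<Gamma> i j * (\<integral>\<omega>. real (Dstar N (\<lambda>n k. C n k \<omega>) t i) \<partial>M))
      \<le> (\<Sum>i<N. \<Gamma> i j) * (K * real t powr \<gamma>)"
    unfolding sum_distrib_right using D Gamma_nonneg j by (intro sum_mono mult_left_mono) auto
  also have "\<dots> \<le> K * real t powr \<gamma>"
    using Gamma_cols[OF j] Gamma_nonneg j K by (intro mult_left_le_one_le sum_nonneg) auto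
  moreover have "\<theta> j \<le> \<theta> j * real t powr \<gamma>"
    using mult_left_mono[OF ge_one_powr_ge_zero[of "real t" \<gamma>], of "\<theta> j"] theta_pos[OF j] t \<gamma> by simp
  ultimately have "?new \<le> (\<theta> j + K) * real t powr \<gamma>"
    by (simp add: distrib_right)
  moreover have "0 \<le> ?new"
    using theta_pos[OF j] Gamma_nonneg j
    by (intro add_nonneg_nonneg sum_nonneg mult_nonneg_nonneg integral_nonneg_AE) auto
  ultimately have "(\<integral>\<omega>. Zstar N \<theta> \<Gamma> (\<lambda>n k. C n k \<omega>) t j \<partial>M) \<le> (\<theta> j + K) * real t powr \<gamma> / real t"
    unfolding expectation_Zstar using theta_pos[OF j] t by (intro frac_le) auto
  then show ?thesis
    using t by (simp add: powr_diff)
qed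

lemma expectation_Vstar_le_powr:
  assumes \<gamma>: "0 < \<gamma>" and u: "\<forall>i<N. 1 \<le> u i" "\<forall>i<N. (\<Sum>j<N. \<Gamma> i j * u j) \<le> \<gamma> * u i"
  obtains K where "0 \<le> K" and "\<And>t. 1 \<le> t \<Longrightarrow> integral\<^sup>L M (Vstar N \<theta> \<Gamma> C t) \<le> K * real t powr (\<gamma> - 1)"
proof -
  obtain K where K: "0 \<le> K" "\<And>t i. 1 \<le> t \<Longrightarrow> i < N \<Longrightarrow>
      (\<integral>\<omega>. real (Dstar N (\<lambda>n k. C n k \<omega>) t i) \<partial>M) \<le> K * real t powr \<gamma>"
    using expectation_Dstar_le_powr[OF assms] by blast
  show ?thesis
  proof (rule that)
    show "0 \<le> (\<Sum>j<N. \<theta> j + K)"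
      using theta_pos K(1) by (intro sum_nonneg) (auto intro: add_nonneg_nonneg less_imp_le)
    fix t :: nat assume t: "1 \<le> t"
    have "integral\<^sup>L M (Vstar N \<theta> \<Gamma> C t) \<le> (\<Sum>j<N. (\<theta> j + K) * real t powr (\<gamma> - 1))"
      using \<gamma> K t by (intro order_trans[OF expectation_Vstar_le sum_mono] expectation_Zstar_le_powr) auto
    then show "integral\<^sup>L M (Vstar N \<theta> \<Gamma> C t) \<le> (\<Sum>j<N. \<theta> j + K) * real t powr (\<gamma> - 1)"
      by (simp only: sum_distrib_right)
  qed
qed

lemma summable_weighted_Vstar:
  assumes g: "0 < g" "g \<le> 1" and \<gamma>: "0 < \<gamma>" "\<gamma> < 2 * g"
    and u: "\<forall>i<N. 1 \<le> u i" "\<forall>i<N. (\<Sum>j<N. \<Gamma> i j * u j) \<le> \<gamma> * u i"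
  shows "summable (\<lambda>t. (zeta g (Suc t))\<^sup>2 / (real (Suc t))\<^sup>2 * integral\<^sup>L M (Vstar N \<theta> \<Gamma> C t))
    \<and> (AE \<omega> in M. summable (\<lambda>t. (zeta g (Suc t))\<^sup>2 / (real (Suc t))\<^sup>2 * Vstar N \<theta> \<Gamma> C t \<omega>))"
proof -
  obtain K where K: "0 \<le> K" "\<And>t. 1 \<le> t \<Longrightarrow> integral\<^sup>L M (Vstar N \<theta> \<Gamma> C t) \<le> K * real t powr (\<gamma> - 1)"
    using expectation_Vstar_le_powr[OF \<gamma>(1) u] by blast
  define c where "c t = (zeta g (Suc t))\<^sup>2 / (real (Suc t))\<^sup>2" for t
  define Z where "Z = (exp (1 - g) / g)\<^sup>2"
  have EV_nonneg: "0 \<le> integral\<^sup>L M (Vstar N \<theta> \<Gamma> C t)" for t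
    using Vstar_bounds(1) by (intro integral_nonneg_AE) auto
  have summable: "summable (\<lambda>t. c t * integral\<^sup>L M (Vstar N \<theta> \<Gamma> C t))"
  proof (rule summable_comparison_test')
    show "summable (\<lambda>t. Z * K * real t powr (\<gamma> - 1 - 2 * g))"
      using \<gamma> by (intro summable_mult) (simp add: summable_real_powr_iff)
    fix t :: nat assume t: "1 \<le> t"
    have "c t * integral\<^sup>L M (Vstar N \<theta> \<Gamma> C t) \<le> Z * real t powr (- 2 * g) * (K * real t powr (\<gamma> - 1))"
      using zeta_weight_le_powr[OF g t] K(2)[OF t] EV_nonneg unfolding c_def Z_def
      by (intro mult_mono) auto
    also have "\<dots> = Z * K * real t powr (\<gamma> - 1 - 2 * g)"
      by (simp add: powr_add[symmetric] algebra_simps)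
    finally show "norm (c t * integral\<^sup>L M (Vstar N \<theta> \<Gamma> C t)) \<le> Z * K * real t powr (\<gamma> - 1 - 2 * g)"
      using EV_nonneg unfolding c_def by simp
  qed
  moreover have "AE \<omega> in M. summable (\<lambda>t. c t * Vstar N \<theta> \<Gamma> C t \<omega>)"
  proof (rule AE_summable_if_summable_integral)
    show "summable (\<lambda>t. integral\<^sup>L M (\<lambda>\<omega>. c t * Vstar N \<theta> \<Gamma> C t \<omega>))"
      using summable by simp
  qed (use integrable_Vstar Vstar_bounds(1) in \<open>auto simp: c_def\<close>)
  ultimately show ?thesis unfolding c_def by blast
qed

end

theorem mainTheorem5:
  fixes M :: "'w measure" and N :: nat and \<theta> :: "nat \<Rightarrow> real"
    and \<Gamma> \<Lambda> W :: "nat \<Rightarrow> nat \<Rightarrow> real" and C :: "nat \<Rightarrow> nat \<Rightarrow> 'w \<Rightarrow> nat"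
  assumes N: "N \<ge> 1"
    and theta_pos: "\<forall>h<N. \<theta> h > 0"
    and Gamma_nonneg: "\<forall>j<N. \<forall>h<N. \<Gamma> j h \<ge> 0"
    and Lambda_nonneg: "\<forall>j<N. \<forall>h<N. \<Lambda> j h \<ge> 0"
    and W_def: "\<forall>j<N. \<forall>h<N. W j h = \<Gamma> j h + \<Lambda> j h"
    and W_cols: "\<forall>h<N. (\<Sum>j<N. W j h) = 1"
    and Gamma_cols: "\<forall>h<N. (\<Sum>j<N. \<Gamma> j h) < 1"
    and Lambda_diag: "\<forall>h<N. \<Lambda> h h > 0"
    and model: "innovation_model M N \<theta> \<Gamma> W C"
    and irred: "irreducible_mat N \<Gamma>"
    and gstar: "0 < pf_eigenvalue N \<Gamma>" "pf_eigenvalue N \<Gamma> < 1"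
  shows "summable (\<lambda>t. (zeta (pf_eigenvalue N \<Gamma>) (Suc t))\<^sup>2 / (real (Suc t))\<^sup>2
                        * integral\<^sup>L M (Vstar N \<theta> \<Gamma> C t))
     \<and> (AE \<omega> in M. summable (\<lambda>t. (zeta (pf_eigenvalue N \<Gamma>) (Suc t))\<^sup>2 / (real (Suc t))\<^sup>2
                        * Vstar N \<theta> \<Gamma> C t \<omega>))"
proof -
  have "innovation_process M N \<theta> \<Gamma> W C"
    using model theta_pos W_cols Gamma_nonneg Gamma_cols
    unfolding innovation_model_def innovation_process_def innovation_process_axioms_def
    by (auto intro: less_imp_le)
  then interpret innovation_process M N \<theta> \<Gamma> W C .
  define g where "g = pf_eigenvalue N \<Gamma>"
  obtain u where "\<forall>i<N. 1 \<le> u i" "\<forall>i<N. (\<Sum>j<N. \<Gamma> i j * u j) \<le> 3 / 2 * g * u i"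
    using pf_subinvariant_vector[of N \<Gamma> "3 / 2 * g"] N Gamma_nonneg gstar unfolding g_def by auto
  then show ?thesis
    using summable_weighted_Vstar[of g "3 / 2 * g" u] gstar unfolding g_def by auto
qed

end
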